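(* Let $i$ be a positive integer and $\mathcal A$ an alphabet. Let $\mathcal B$ be the Butterfly Network and let $\mathbf A_{\mathcal B}$ be an adversary able to attack up to one edge of $\mathcal U=\{e_1,e_2,e_3,e_4,e_6,e_7,e_9\}$ in each round, possibly a different one in each round (Scenario A.2). Then the $i$-shot capacity of $\mathcal B$ is \[C_i(\mathcal B,\mathcal A,\mathbf A_{\mathcal B})=\log_{|\mathcal A|}(|\mathcal A|-1).\]
   Context: An alphabet is a finite set $\mathcal A$ with $|\mathcal A|\ge2$. The Butterfly Network $\mathcal B$ has source $S$, intermediate nodes $V_1,V_2,V_3,V_4$, terminals $T_1,T_2$, and edges $e_1,e_2:S\to V_1$; $e_3,e_4:S\to V_2$; $e_5:V_1\to T_1$; $e_6:V_1\to V_3$; $e_7:V_2\to V_3$; $e_8:V_2\to T_2$; $e_9:V_3\to V_4$; $e_{10}:V_4\to T_1$; $e_{11}:V_4\to T_2$. Each edge carries one symbol of $\mathcal A$. A network code assigns to each $V_j$ a function from the symbols on its incoming edges to the symbols on its outgoing edges. In one use, $S$ sends $x\in\mathcal A^4$ on $e_1,\dots,e_4$, the adversary may replace the symbol on at most one edge of $\mathcal U$ by an arbitrary symbol, and values propagate; $\Omega_k(x)$ is the set of vectors terminal $T_k$ can receive. For $i$ uses with the same network code (Scenario A.2), the fan-out set at $T_k$ of $(x^1,\dots,x^i)$ is $\Omega_k(x^1)\times\dots\times\Omega_k(x^i)$. A nonempty code $C\subseteq(\mathcal A^4)^i$ is unambiguous if, for each of $T_1,T_2$, distinct codewords have disjoint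 fan-out sets; $C_i$ is the maximum of $\log_{|\mathcal A|}(|C|)/i$ over network codes and unambiguous codes. *)

theory Defs
  imports Complex_Main "HOL-Library.Cardinality"
begin

text \<open>Edges are numbered 1..11 as e_1..e_11.
  A network code assigns to each intermediate node a function from its incoming
  symbols to its outgoing symbols; we record it edge-wise (one component function
  per outgoing edge, each depending on all incoming symbols of the node).\<close>

record 'a ncode =
  f5  :: "'a \<Rightarrow> 'a \<Rightarrow> 'a"   (* V1: (e1,e2) -> e5 *)
  f6  :: "'a \<Rightarrow> 'a \<Rightarrow> 'a"   (* V1: (e1,e2) -> e6 *)
  f7  :: "'a \<Rightarrow> 'a \<Rightarrow> 'a"   (* V2: (e3,e4) -> e7 *)
  f8  :: "'a \<Rightarrow> 'a \<Rightarrow> 'a"   (* V2: (e3,e4) -> e8 *)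
  f9  :: "'a \<Rightarrow> 'a \<Rightarrow> 'a"   (* V3: (e6,e7) -> e9 *)
  f10 :: "'a \<Rightarrow> 'a"         (* V4: e9 -> e10 *)
  f11 :: "'a \<Rightarrow> 'a"         (* V4: e9 -> e11 *)

definition U_edges :: "nat set" where
  "U_edges = {1,2,3,4,6,7,9}"

fun adv :: "(nat \<times> 'a) option \<Rightarrow> nat \<Rightarrow> 'a \<Rightarrow> 'a" where
  "adv None j s = s"
| "adv (Some (e, b)) j s = (if j = e then b else s)"

fun adv_ok :: "(nat \<times> 'a) option \<Rightarrow> bool" where
  "adv_ok None = True"
| "adv_ok (Some (e, b)) = (e \<in> U_edges)"

text \<open>One use of the network: returns what T1 receives (on e5, e10) and what T2
  receives (on e8, e11).\<close>
definition run :: "'a ncode \<Rightarrow> (nat \<times> 'a) option \<Rightarrow> 'a \<times> 'a \<times> 'a \<times> 'a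
                    \<Rightarrow> ('a \<times> 'a) \<times> ('a \<times> 'a)" where
  "run c att x = (case x of (x1, x2, x3, x4) \<Rightarrow>
     let y1 = adv att 1 x1; y2 = adv att 2 x2; y3 = adv att 3 x3; y4 = adv att 4 x4;
         y5 = adv att 5 (f5 c y1 y2); y6 = adv att 6 (f6 c y1 y2);
         y7 = adv att 7 (f7 c y3 y4); y8 = adv att 8 (f8 c y3 y4);
         y9 = adv att 9 (f9 c y6 y7);
         y10 = adv att 10 (f10 c y9); y11 = adv att 11 (f11 c y9)
     in ((y5, y10), (y8, y11)))"

text \<open>Omega_k(x): the set of vectors terminal T_k (k = 1,2) can receive.\<close>
definition Omega :: "nat \<Rightarrow> 'a ncode \<Rightarrow> 'a \<times> 'a \<times> 'a \<times> 'a \<Rightarrow> ('a \<times> 'a) set" where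
  "Omega k c x = {(if k = 1 then fst else snd) (run c att x) | att. adv_ok att}"

text \<open>Fan-out set at T_k of a sequence of i inputs (Scenario A.2): product of the
  one-shot fan-out sets.\<close>
definition fanout :: "nat \<Rightarrow> 'a ncode \<Rightarrow> ('a \<times> 'a \<times> 'a \<times> 'a) list \<Rightarrow> ('a \<times> 'a) list set" where
  "fanout k c xs = listset (map (Omega k c) xs)"

definition unambiguous :: "'a ncode \<Rightarrow> nat \<Rightarrow> ('a \<times> 'a \<times> 'a \<times> 'a) list set \<Rightarrow> bool" where
  "unambiguous c i C \<longleftrightarrow> C \<noteq> {} \<and> (\<forall>xs\<in>C. length xs = i) \<and>
     (\<forall>k\<in>{1::nat, 2}. \<forall>xs\<in>C. \<forall>ys\<in>C. xs \<noteq> ys \<longrightarrow> fanout k c xs \<inter> fanout k c ys = {})"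

definition capacity :: "'a::finite itself \<Rightarrow> nat \<Rightarrow> real" where
  "capacity (t :: 'a itself) i = Max {log (real CARD('a)) (real (card C)) / real i
                       | c C. unambiguous (c :: 'a ncode) i C}"

end

theory Submission
  imports Defs
begin

text \<open>
  Upper bound: T1 reads e5, which the adversary can change by corrupting e1 or e2, and e10,
  which it sets freely by corrupting e9. Hence x and y are confusable at T1 as soon as the
  genuine e5 symbol of y can be forced onto e5 from x through e1 or e2. Only one symbol can be
  the sole symbol reachable in this way from some input, so there is a symbol w such that every
  input can be labelled by a reachable symbol other than w, namely by its genuine e5 symbol
  whenever that differs from w. Equal labels imply confusability, so an unambiguous code injects
  into words over the remaining \<open>|A| - 1\<close> symbols.

  Lower bound: fix an erasure symbol z. V1 and V2 forward agreeing inputs and output z on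
  disagreement, V3 prefers e7 unless it carries z, and each terminal reads its direct edge
  unless it shows z, in which case it reads the edge from V4. A single corrupted edge never
  fools this decoder on repetitions \<open>(m, m, m, m)\<close> with \<open>m \<noteq> z\<close>, giving
  \<open>(|A| - 1)^i\<close> codewords.
\<close>

lemma ex_neq_if_CARD_ge_2:
  assumes "CARD('a::finite) \<ge> 2"
  shows "\<exists>y::'a. y \<noteq> x"
  using assms card_le_Suc0_iff_eq[of "UNIV :: 'a set"] by (auto, metis)

lemma set_Cons_eq_empty_iff: "set_Cons A Xs = {} \<longleftrightarrow> A = {} \<or> Xs = {}"
  by (auto simp: set_Cons_def)

lemma listset_Int_eq_empty_iff:
  assumes "length As = length Bs"
  shows "listset As \<inter> listset Bs = {} \<longleftrightarrow> (\<exists>j<length As. As ! j \<inter> Bs ! j = {})"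
  using assms
proof (induction As Bs rule: list_induct2)
  case Nil
  then show ?case by simp
next
  case (Cons A As B Bs)
  have "listset (A # As) \<inter> listset (B # Bs) = set_Cons (A \<inter> B) (listset As \<inter> listset Bs)"
    by (auto simp: set_Cons_def)
  then show ?case
    using Cons.IH by (simp add: set_Cons_eq_empty_iff Ex_less_Suc2)
qed

lemma fanout_Int_eq_empty_iff:
  assumes "length xs = length ys"
  shows "fanout k c xs \<inter> fanout k c ys = {} \<longleftrightarrow>
    (\<exists>j<length xs. Omega k c (xs ! j) \<inter> Omega k c (ys ! j) = {})"
  using assms by (auto simp: fanout_def listset_Int_eq_empty_iff) (metis nth_map)

lemma inj_on_map_if_equal_labels_confusable:
  assumes "unambiguous c i C" and "k \<in> {1, 2}"
    and confusable: "\<And>x y. \<phi> x = \<phi> y \<Longrightarrow> Omega k c x \<inter> Omega k c y \<noteq> {}"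
  shows "inj_on (map \<phi>) C"
proof (rule inj_onI, rule ccontr)
  fix xs ys
  assume "xs \<in> C" "ys \<in> C" "map \<phi> xs = map \<phi> ys" "xs \<noteq> ys"
  moreover from this have "length xs = length ys"
    using assms(1) by (simp add: unambiguous_def)
  moreover have "fanout k c xs \<inter> fanout k c ys = {}"
    using assms(1,2) calculation unfolding unambiguous_def by blast
  ultimately obtain j where "j < length xs" "Omega k c (xs ! j) \<inter> Omega k c (ys ! j) = {}"
    by (auto simp: fanout_Int_eq_empty_iff)
  moreover have "\<phi> (xs ! j) = \<phi> (ys ! j)"
    using \<open>map \<phi> xs = map \<phi> ys\<close> \<open>j < length xs\<close> by (metis nth_map map_eq_imp_length_eq)
  ultimately show False
    using confusable by blast
qed

lemma finite_unambiguous: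
  fixes C :: "('a::finite \<times> 'a \<times> 'a \<times> 'a) list set"
  assumes "unambiguous c i C"
  shows "finite C"
proof (rule finite_subset)
  show "C \<subseteq> {xs. set xs \<subseteq> UNIV \<and> length xs = i}"
    using assms by (auto simp: unambiguous_def)
qed (rule finite_lists_length_eq, simp)

fun e5_symbol :: "'a ncode \<Rightarrow> 'a \<times> 'a \<times> 'a \<times> 'a \<Rightarrow> 'a" where
  "e5_symbol c (x1, x2, _, _) = f5 c x1 x2"

fun e5_reachable :: "'a ncode \<Rightarrow> 'a \<times> 'a \<times> 'a \<times> 'a \<Rightarrow> 'a set" where
  "e5_reachable c (x1, x2, _, _) = range (\<lambda>a. f5 c a x2) \<union> range (f5 c x1)"

lemma e5_symbol_reachable: "e5_symbol c x \<in> e5_reachable c x"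
  by (cases x) auto

lemma Omega1_meet_if_e5_reachable:
  assumes "e5_symbol c y \<in> e5_reachable c x"
  shows "Omega 1 c x \<inter> Omega 1 c y \<noteq> {}"
proof -
  obtain x1 x2 x3 x4 where x: "x = (x1, x2, x3, x4)" by (cases x)
  obtain y1 y2 y3 y4 where y: "y = (y1, y2, y3, y4)" by (cases y)
  have received: "fst (run c att v) \<in> Omega 1 c v" if "adv_ok att" for att v
    using that unfolding Omega_def by auto
  have meet: "Omega 1 c x \<inter> Omega 1 c y \<noteq> {}"
    if "fst (run c (Some (e, a)) x) = fst (run c (Some (9, b)) y)" and "e \<in> {1, 2}" for e a b
    using that received[of "Some (e, a)" x] received[of "Some (9, b)" y]
    by (auto simp: U_edges_def)
  from assms consider a where "f5 c y1 y2 = f5 c a x2" | a where "f5 c y1 y2 = f5 c x1 a"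
    unfolding x y by auto
  then show ?thesis
  proof cases
    case 1
    then have "fst (run c (Some (1, a)) x) =
        fst (run c (Some (9, f9 c (f6 c a x2) (f7 c x3 x4))) y)"
      unfolding x y by (simp add: run_def Let_def)
    then show ?thesis
      by (rule meet) simp
  next
    case 2
    then have "fst (run c (Some (2, a)) x) =
        fst (run c (Some (9, f9 c (f6 c x1 a) (f7 c x3 x4))) y)"
      unfolding x y by (simp add: run_def Let_def)
    then show ?thesis
      by (rule meet) simp
  qed
qed

lemma ex_symbol_avoidable:
  fixes f :: "'a \<Rightarrow> 'a \<Rightarrow> 'a" and u v :: 'a
  assumes "u \<noteq> v"
  shows "\<exists>w. \<forall>a b. \<exists>x. f a x \<noteq> w \<or> f x b \<noteq> w"
proof (rule ccontr)
  assume "\<nexists>w. \<forall>a b. \<exists>x. f a x \<noteq> w \<or> f x b \<noteq> w"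
  then obtain a b' where "\<forall>x. f a x = u" and "\<forall>x. f x b' = v"
    by blast
  with assms show False
    by metis
qed

lemma T1_confusion_labelling:
  fixes c :: "'a ncode"
  assumes "(u :: 'a) \<noteq> v"
  obtains \<phi> :: "'a \<times> 'a \<times> 'a \<times> 'a \<Rightarrow> 'a" and w
  where "\<And>x. \<phi> x \<noteq> w" and "\<And>x y. \<phi> x = \<phi> y \<Longrightarrow> Omega 1 c x \<inter> Omega 1 c y \<noteq> {}"
proof -
  obtain w where avoid: "\<And>a b. \<exists>x. f5 c a x \<noteq> w \<or> f5 c x b \<noteq> w"
    using ex_symbol_avoidable[OF assms] by blast
  define \<phi> where "\<phi> x = (if e5_symbol c x \<noteq> w then e5_symbol c x
      else SOME s. s \<in> e5_reachable c x - {w})" for x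
  have "e5_reachable c x - {w} \<noteq> {}" for x
    using avoid[of "fst x" "fst (snd x)"] by (cases x) auto
  then have "(SOME s. s \<in> e5_reachable c x - {w}) \<in> e5_reachable c x - {w}" for x
    by (metis some_in_eq)
  then have \<phi>_reachable: "\<phi> x \<in> e5_reachable c x - {w}" for x
    using e5_symbol_reachable[of c x] unfolding \<phi>_def by auto
  have \<phi>_e5: "e5_symbol c x \<noteq> w \<Longrightarrow> \<phi> x = e5_symbol c x" for x
    by (simp add: \<phi>_def)
  have confusable: "Omega 1 c x \<inter> Omega 1 c y \<noteq> {}" if "\<phi> x = \<phi> y" for x y
  proof (cases "e5_symbol c y \<noteq> w")
    case True
    then show ?thesis
      using that \<phi>_reachable[of x] \<phi>_e5[of y] Omega1_meet_if_e5_reachable by (metis DiffD1)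
  next
    case False
    then have "e5_symbol c y \<in> e5_reachable c x \<or> e5_symbol c x \<in> e5_reachable c y"
      using that \<phi>_reachable[of y] \<phi>_e5[of x] e5_symbol_reachable[of c x] by (metis DiffD1)
    then show ?thesis
      using Omega1_meet_if_e5_reachable by blast
  qed
  show thesis
    using \<phi>_reachable confusable by (intro that[where \<phi> = \<phi> and w = w]) auto
qed

lemma card_unambiguous_le:
  fixes c :: "'a::finite ncode"
  assumes "CARD('a) \<ge> 2" and "unambiguous c i C"
  shows "card C \<le> (CARD('a) - 1) ^ i"
proof -
  obtain u :: 'a where "u \<noteq> undefined"
    using ex_neq_if_CARD_ge_2[OF assms(1)] by blast
  then obtain \<phi> :: "'a \<times> 'a \<times> 'a \<times> 'a \<Rightarrow> 'a" and w
    where avoids: "\<And>x. \<phi> x \<noteq> w"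
      and confusable: "\<And>x y. \<phi> x = \<phi> y \<Longrightarrow> Omega 1 c x \<inter> Omega 1 c y \<noteq> {}"
    by (rule T1_confusion_labelling[where c = c]) blast
  have "inj_on (map \<phi>) C"
    by (rule inj_on_map_if_equal_labels_confusable[OF assms(2) _ confusable]) simp
  moreover have "map \<phi> ` C \<subseteq> {zs. set zs \<subseteq> UNIV - {w} \<and> length zs = i}"
    using assms(2) by (auto simp: unambiguous_def avoids[THEN not_sym])
  ultimately have "card C \<le> card {zs. set zs \<subseteq> UNIV - {w} \<and> length zs = i}"
    by (rule card_inj_on_le) (simp add: finite_lists_length_eq)
  also have "\<dots> = (CARD('a) - 1) ^ i"
    by (simp add: card_lists_length_eq card_Diff_singleton)
  finally show ?thesis .
qed

definition erasure_code :: "'a \<Rightarrow> 'a ncode" where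
  "erasure_code z = \<lparr>f5 = (\<lambda>a b. if a = b then a else z), f6 = (\<lambda>a b. if a = b then a else z),
     f7 = (\<lambda>a b. if a = b then a else z), f8 = (\<lambda>a b. if a = b then a else z),
     f9 = (\<lambda>s t. if t \<noteq> z then t else s), f10 = id, f11 = id\<rparr>"

definition erasure_decode :: "'a \<Rightarrow> 'a \<times> 'a \<Rightarrow> 'a" where
  "erasure_decode z p = (if fst p = z then snd p else fst p)"

lemma erasure_decode_run:
  assumes "m \<noteq> z" and "adv_ok att"
  shows "erasure_decode z (fst (run (erasure_code z) att (m, m, m, m))) = m
    \<and> erasure_decode z (snd (run (erasure_code z) att (m, m, m, m))) = m"
proof (cases att)
  case None
  then show ?thesis
    using assms by (simp add: run_def erasure_code_def erasure_decode_def)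
next
  case (Some p)
  then obtain e b where att: "att = Some (e, b)"
    by (cases p) auto
  then have "e \<in> {1, 2, 3, 4, 6, 7, 9}"
    using assms(2) by (simp add: U_edges_def)
  then show ?thesis
    using assms(1) unfolding att by (auto simp: run_def erasure_code_def erasure_decode_def)
qed

lemma erasure_decode_Omega:
  assumes "m \<noteq> z" and "p \<in> Omega k (erasure_code z) (m, m, m, m)"
  shows "erasure_decode z p = m"
  using assms erasure_decode_run[OF assms(1)] by (auto simp: Omega_def)

lemma unambiguous_erasure_code:
  fixes m z :: 'a
  assumes "m \<noteq> z"
  shows "unambiguous (erasure_code z) i
    {xs. set xs \<subseteq> (\<lambda>a. (a, a, a, a)) ` (UNIV - {z}) \<and> length xs = i}"
    (is "unambiguous _ _ ?C")
proof -
  have Omega_disjoint: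
      "Omega k (erasure_code z) (a, a, a, a) \<inter> Omega k (erasure_code z) (b, b, b, b) = {}"
    if "a \<noteq> z" "b \<noteq> z" "a \<noteq> b" for k a b
    using that erasure_decode_Omega[OF \<open>a \<noteq> z\<close>] erasure_decode_Omega[OF \<open>b \<noteq> z\<close>] by blast
  have "fanout k (erasure_code z) xs \<inter> fanout k (erasure_code z) ys = {}"
    if xs: "xs \<in> ?C" and ys: "ys \<in> ?C" and "xs \<noteq> ys" for k xs ys
  proof -
    have len: "length xs = length ys"
      using xs ys by simp
    then obtain j where j: "j < length xs" "xs ! j \<noteq> ys ! j"
      using \<open>xs \<noteq> ys\<close> nth_equalityI by blast
    then have "xs ! j \<in> set xs" "ys ! j \<in> set ys"
      using len by simp_all
    then obtain a b where "xs ! j = (a, a, a, a)" "ys ! j = (b, b, b, b)" "a \<noteq> z" "b \<noteq> z"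
      using xs ys by blast
    then have "Omega k (erasure_code z) (xs ! j) \<inter> Omega k (erasure_code z) (ys ! j) = {}"
      using Omega_disjoint j(2) by auto
    then show ?thesis
      using j(1) len fanout_Int_eq_empty_iff by blast
  qed
  moreover have "replicate i (m, m, m, m) \<in> ?C"
    using assms by auto
  ultimately show ?thesis
    by (auto simp only: unambiguous_def mem_Collect_eq)
qed

lemma ex_unambiguous_card_eq:
  assumes "CARD('a::finite) \<ge> 2"
  shows "\<exists>(c :: 'a ncode) C. unambiguous c i C \<and> card C = (CARD('a) - 1) ^ i"
proof -
  let ?C = "{xs. set xs \<subseteq> (\<lambda>a. (a, a, a, a)) ` (UNIV - {undefined :: 'a}) \<and> length xs = i}"
  obtain m :: 'a where "m \<noteq> undefined"
    using ex_neq_if_CARD_ge_2[OF assms] by blast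
  then have "unambiguous (erasure_code undefined) i ?C"
    by (rule unambiguous_erasure_code)
  moreover have "card ?C = (CARD('a) - 1) ^ i"
    by (simp add: card_lists_length_eq card_image inj_on_def card_Diff_singleton)
  ultimately show ?thesis
    by blast
qed

lemma log_card_unambiguous_le:
  fixes c :: "'a::finite ncode"
  assumes "CARD('a) \<ge> 2" and "unambiguous c i C"
  shows "log (real CARD('a)) (card C) \<le> i * log (real CARD('a)) (real CARD('a) - 1)"
proof -
  have "C \<noteq> {}"
    using assms(2) by (simp add: unambiguous_def)
  then have "0 < card C"
    using finite_unambiguous[OF assms(2)] by (simp add: card_gt_0_iff)
  moreover have "real (card C) \<le> real ((CARD('a) - 1) ^ i)"
    using card_unambiguous_le[OF assms] by (simp only: of_nat_le_iff)
  moreover have "real ((CARD('a) - 1) ^ i) = (real CARD('a) - 1) ^ i"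
    using assms(1) by (simp add: of_nat_diff)
  ultimately have "log (real CARD('a)) (card C) \<le> log (real CARD('a)) ((real CARD('a) - 1) ^ i)"
    using assms(1) by (intro log_mono) auto
  also have "\<dots> = i * log (real CARD('a)) (real CARD('a) - 1)"
    using assms(1) by (simp add: log_nat_power)
  finally show ?thesis .
qed

theorem proposition5p8:
  fixes i :: nat
  assumes "i > 0" and "CARD('a::finite) \<ge> 2"
  shows "capacity TYPE('a) i = log (real CARD('a)) (real CARD('a) - 1)"
proof -
  let ?q = "real CARD('a)"
  define S where "S = {log ?q (real (card C)) / real i | (c :: 'a ncode) C. unambiguous c i C}"
  have bounded: "r \<le> log ?q (?q - 1)" if "r \<in> S" for r
    using that log_card_unambiguous_le[OF assms(2)] assms(1)
    by (auto simp: S_def divide_le_eq mult.commute)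
  have attained: "log ?q (?q - 1) \<in> S"
  proof -
    obtain c C where "unambiguous (c :: 'a ncode) i C" "card C = (CARD('a) - 1) ^ i"
      using ex_unambiguous_card_eq[OF assms(2)] by blast
    moreover have "log ?q (real ((CARD('a) - 1) ^ i)) / i = log ?q (?q - 1)"
      using assms by (simp add: log_nat_power of_nat_diff)
    ultimately show ?thesis
      unfolding S_def by force
  qed
  have "finite S"
  proof (rule finite_subset)
    show "S \<subseteq> (\<lambda>n. log ?q (real n) / real i) ` {..(CARD('a) - 1) ^ i}"
      using card_unambiguous_le[OF assms(2)] by (auto simp: S_def)
  qed simp
  moreover have "capacity TYPE('a) i = Max S"
    by (simp add: capacity_def S_def)
  ultimately show ?thesis
    using bounded attained by (simp add: Max_eqI)
qed

end
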